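(* Let $n,k,b,t$ be positive integers with $k\le n$, let $V=\{1,\dots,n\}$, and let $Q_1,\dots,Q_t$ be arbitrary subsets of $V\times\{1,\dots,b\}$; for $1\le i\le t$ and $1\le\beta\le b$ put $Q_{i,\beta}=\{x\in V:(x,\beta)\in Q_i\}$. Let $\mathcal F_k^n$ be the family of all $k$-element subsets of $V$. Suppose that $k/2$ is a prime power and that $t\le \frac{k}{2b}\lg\frac{n}{k}-\frac{k+1}{b}$, where $\lg$ is the binary logarithm. Then there exist two sets $A,B\in\mathcal F_k^n$ such that (a) $|A\cap B|=k/2$, and (b) for every $1\le\beta\le b$ and $1\le i\le t$, $|A\cap Q_{i,\beta}|$ is odd if and only if $|B\cap Q_{i,\beta}|$ is odd.
   Context: Each $Q_i$ (a "query") is interpreted as the set of pairs (station $x$, channel $\beta$) such that station $x$ transmits on channel $\beta$ at time step $i$; a deterministic oblivious algorithm is represented by such a sequence $Q_1,\dots,Q_t$. *)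

theory Defs
  imports Complex_Main "HOL-Computational_Algebra.Primes"
begin

definition query_channel :: "nat \<Rightarrow> (nat \<Rightarrow> (nat \<times> nat) set) \<Rightarrow> nat \<Rightarrow> nat \<Rightarrow> nat set" where
  "query_channel n Q i \<beta> = {x \<in> {1..n}. (x, \<beta>) \<in> Q i}"

end

theory Submission
  imports Defs "Jordan_Normal_Form.Determinant" "HOL-Library.FuncSet"
begin

text \<open>Write \<open>k = 2q\<close> with \<open>q = p^m\<close>. Among the \<open>(n-1 choose k-1)\<close> sets \<open>A \<in> F_k^n\<close>
  containing station 1, the parity profile \<open>{(i,\<beta>). |A \<inter> Q_{i,\<beta>}| odd}\<close> takes at most
  \<open>2^(bt)\<close> values, and the bound on \<open>t\<close> makes \<open>2^(bt) \<Sum>_{j<q} (n choose j) < (n-1 choose k-1)\<close>.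
  So some profile class is larger than \<open>\<Sum>_{j<q} (n choose j)\<close>. By the Frankl--Wilson argument a
  family of \<open>2q\<close>-sets with pairwise nonempty intersections, none of size exactly \<open>q\<close>, is not that
  large: the product of its signed inclusion matrix against the sets of size \<open>< q\<close> with the
  transposed inclusion matrix has entries \<open>((|A \<inter> B| - 1) choose (q - 1))\<close>, which modulo \<open>p\<close>
  vanish exactly off the diagonal, so this product is nonsingular, yet it factors through the
  small sets. Hence two sets of one class meet in exactly \<open>q\<close> elements.\<close>

section \<open>Binomial coefficients modulo a prime power\<close>

lemma prime_dvd_choose_prime_power:
  assumes p: "prime (p::nat)" and l: "0 < l" "l < p ^ m"
  shows "p dvd (p ^ m choose l)"
proof (rule ccontr)
  assume "\<not> p dvd (p ^ m choose l)"
  hence "coprime (p ^ m) (p ^ m choose l)"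
    using p by (simp add: prime_imp_coprime)
  moreover have "p ^ m dvd l * (p ^ m choose l)"
    using times_binomial_minus1_eq[OF l(1), of "p ^ m"] by simp
  ultimately have "p ^ m dvd l"
    using coprime_dvd_mult_left_iff by blast
  thus False
    using l by (simp add: nat_dvd_not_less)
qed

lemma choose_prime_power_add_mod:
  assumes p: "prime (p::nat)"
  shows "(p ^ m + y choose (p ^ m - 1)) mod p = (y choose (p ^ m - 1)) mod p"
proof -
  let ?q = "p ^ m"
  let ?g = "\<lambda>l. (?q choose l) * (y choose (?q - 1 - l))"
  have "?q + y choose (?q - 1) = (\<Sum>l\<le>?q - 1. ?g l)"
    using vandermonde[of ?q y "?q - 1"] by simp
  also have "\<dots> = ?g 0 + (\<Sum>l\<in>{1..?q - 1}. ?g l)"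
    by (simp add: atMost_atLeast0 sum.atLeast_Suc_atMost)
  finally have split: "?q + y choose (?q - 1) = (y choose (?q - 1)) + (\<Sum>l\<in>{1..?q - 1}. ?g l)"
    by simp
  have "p dvd (\<Sum>l\<in>{1..?q - 1}. ?g l)"
  proof (rule dvd_sum)
    fix l assume "l \<in> {1..?q - 1}"
    hence "0 < l" "l < ?q" by auto
    thus "p dvd ?g l"
      using prime_dvd_choose_prime_power[OF p] by (simp add: dvd_mult2)
  qed
  thus ?thesis
    unfolding split by (simp add: mod_add_right_eq[symmetric])
qed

lemma prime_dvd_choose_pred:
  assumes p: "prime (p::nat)" and i: "1 \<le> i" "i < 2 * p ^ m" "i \<noteq> p ^ m"
  shows "p dvd ((i - 1) choose (p ^ m - 1))"
proof (cases "i < p ^ m")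
  case True
  hence "i - 1 < p ^ m - 1"
    using i by linarith
  thus ?thesis
    by (simp add: binomial_eq_0)
next
  case False
  hence "i - 1 = p ^ m + (i - 1 - p ^ m)" using i by simp
  hence "((i - 1) choose (p ^ m - 1)) mod p = ((i - 1 - p ^ m) choose (p ^ m - 1)) mod p"
    using choose_prime_power_add_mod[OF p] by metis
  also have "(i - 1 - p ^ m) choose (p ^ m - 1) = 0"
    using i by simp
  finally show ?thesis
    by (simp add: dvd_eq_mod_eq_0)
qed

lemma prime_not_dvd_choose_double_pred:
  assumes p: "prime (p::nat)"
  shows "\<not> p dvd ((2 * p ^ m - 1) choose (p ^ m - 1))"
proof -
  have "2 * p ^ m - 1 = p ^ m + (p ^ m - 1)"
    using p by (simp add: prime_gt_0_nat)
  hence "((2 * p ^ m - 1) choose (p ^ m - 1)) mod p = 1"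
    using choose_prime_power_add_mod[OF p, of m "p ^ m - 1"] prime_gt_1_nat[OF p] by simp
  thus ?thesis
    by (simp add: dvd_eq_mod_eq_0)
qed

section \<open>Signed sums over small subsets\<close>

lemma sum_alternating_choose:
  assumes "1 \<le> i"
  shows "(\<Sum>j\<le>q. (-1::int) ^ (q - j) * int (i choose j)) = int ((i - 1) choose q)"
proof -
  have "(-1::real) ^ (q - j) = (-1) ^ q * (-1) ^ j" if "j \<le> q" for j
    using that by (simp add: minus_one_power_iff)
  hence "real_of_int (\<Sum>j\<le>q. (-1) ^ (q - j) * int (i choose j))
      = (-1) ^ q * (\<Sum>j\<le>q. (real i gchoose j) * (-1) ^ j)"
    by (auto simp: sum_distrib_left binomial_gbinomial intro!: sum.cong)
  also have "\<dots> = (real i - 1 gchoose q)"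
    by (simp add: gbinomial_sum_lower_neg flip: power_add mult.assoc)
  also have "\<dots> = real ((i - 1) choose q)"
    using assms by (simp add: binomial_gbinomial of_nat_diff)
  finally show ?thesis
    by (simp only: of_int_of_nat_eq of_int_eq_iff)
qed

lemma sum_subsets_card_less:
  fixes \<phi> :: "nat \<Rightarrow> 'a::comm_semiring_1"
  assumes "finite X"
  shows "(\<Sum>S\<in>{S. S \<subseteq> X \<and> card S < q}. \<phi> (card S)) = (\<Sum>j<q. of_nat (card X choose j) * \<phi> j)"
proof (induction q)
  case 0
  then show ?case by simp
next
  case (Suc q)
  have "{S. S \<subseteq> X \<and> card S < Suc q} = {S. S \<subseteq> X \<and> card S < q} \<union> {S. S \<subseteq> X \<and> card S = q}"
    by auto
  hence "(\<Sum>S\<in>{S. S \<subseteq> X \<and> card S < Suc q}. \<phi> (card S)) =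
      (\<Sum>S\<in>{S. S \<subseteq> X \<and> card S < q}. \<phi> (card S)) + (\<Sum>S\<in>{S. S \<subseteq> X \<and> card S = q}. \<phi> q)"
    using assms by (simp add: sum.union_disjoint disjoint_iff)
  also have "(\<Sum>S\<in>{S. S \<subseteq> X \<and> card S = q}. \<phi> q) = of_nat (card X choose q) * \<phi> q"
    using n_subsets[OF assms] by simp
  finally show ?case
    by (simp add: Suc.IH)
qed

lemma card_subsets_card_less:
  assumes "finite X"
  shows "card {S. S \<subseteq> X \<and> card S < q} = (\<Sum>j<q. card X choose j)"
  using sum_subsets_card_less[OF assms, of "\<lambda>_. 1::nat" q] by simp

lemma sum_signed_subsets_card_less:
  assumes "finite X" "X \<noteq> {}" "0 < q"
  shows "(\<Sum>S\<in>{S. S \<subseteq> X \<and> card S < q}. (-1::int) ^ (q - 1 - card S)) = int ((card X - 1) choose (q - 1))"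
proof -
  have "(\<Sum>S\<in>{S. S \<subseteq> X \<and> card S < q}. (-1::int) ^ (q - 1 - card S))
      = (\<Sum>j<q. int (card X choose j) * (-1) ^ (q - 1 - j))"
    using sum_subsets_card_less[OF assms(1)] by simp
  also have "\<dots> = (\<Sum>j\<le>q - 1. (-1) ^ (q - 1 - j) * int (card X choose j))"
    using assms(3) by (simp add: mult.commute lessThan_Suc_atMost[symmetric])
  also have "\<dots> = int ((card X - 1) choose (q - 1))"
    by (rule sum_alternating_choose) (use assms in \<open>simp add: card_gt_0_iff Suc_le_eq\<close>)
  finally show ?thesis .
qed

section \<open>Determinants modulo a prime\<close>

lemma det_eq_0_if_zero_col:
  assumes A: "A \<in> carrier_mat n n" and c: "c < n" and zero: "\<And>i. i < n \<Longrightarrow> A $$ (i, c) = 0"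
  shows "det A = 0"
proof -
  have "(\<Prod>i = 0..<n. A $$ (i, \<pi> i)) = 0" if "\<pi> permutes {0..<n}" for \<pi>
  proof -
    have "inv_into UNIV \<pi> c < n" "\<pi> (inv_into UNIV \<pi> c) = c"
      using permutes_in_image[OF permutes_inv[OF that]] permutes_inverses(1)[OF that] c by auto
    thus ?thesis
      using zero by (intro prod_zero bexI[of _ "inv_into UNIV \<pi> c"]) auto
  qed
  thus ?thesis
    unfolding det_def'[OF A] by simp
qed

lemma prime_not_dvd_det:
  assumes A: "A \<in> carrier_mat n n" and p: "prime (p::int)"
    and diag: "\<And>i. i < n \<Longrightarrow> \<not> p dvd A $$ (i, i)"
    and off_diag: "\<And>i j. i < n \<Longrightarrow> j < n \<Longrightarrow> i \<noteq> j \<Longrightarrow> p dvd A $$ (i, j)"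
  shows "\<not> p dvd det A"
proof -
  define P where "P = {\<pi>. \<pi> permutes {0..<n}}"
  have "det A = (\<Prod>i = 0..<n. A $$ (i, i)) + (\<Sum>\<pi>\<in>P - {id}. signof \<pi> * (\<Prod>i = 0..<n. A $$ (i, \<pi> i)))"
    unfolding det_def'[OF A] P_def
    by (subst sum.remove[of _ id]) (auto simp: permutes_id finite_permutations)
  moreover have "p dvd (\<Sum>\<pi>\<in>P - {id}. signof \<pi> * (\<Prod>i = 0..<n. A $$ (i, \<pi> i)))"
  proof (rule dvd_sum)
    fix \<pi> assume "\<pi> \<in> P - {id}"
    have perm: "\<pi> permutes {0..<n}" and "\<pi> \<noteq> id"
      using \<open>\<pi> \<in> P - {id}\<close> by (auto simp: P_def)
    then obtain i where i: "\<pi> i \<noteq> i"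
      by (metis eq_id_iff)
    hence "i < n" "\<pi> i < n"
      using permutes_not_in[OF perm] permutes_in_image[OF perm] by auto
    hence "p dvd A $$ (i, \<pi> i)" "A $$ (i, \<pi> i) dvd (\<Prod>i = 0..<n. A $$ (i, \<pi> i))"
      using off_diag i by (auto intro: dvd_prodI)
    hence "p dvd (\<Prod>i = 0..<n. A $$ (i, \<pi> i))"
      by (rule dvd_trans)
    thus "p dvd signof \<pi> * (\<Prod>i = 0..<n. A $$ (i, \<pi> i))"
      by simp
  qed
  moreover have "\<not> p dvd (\<Prod>i = 0..<n. A $$ (i, i))"
    using diag by (simp add: prime_dvd_prod_iff[OF _ p])
  ultimately show ?thesis
    by (simp add: dvd_add_left_iff)
qed

lemma card_le_card_if_prime_factorization:
  fixes u :: "'a \<Rightarrow> 'b \<Rightarrow> int" and v :: "'b \<Rightarrow> 'a \<Rightarrow> int"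
  assumes F: "finite F" and S: "finite S" and p: "prime p"
    and diag: "\<And>A. A \<in> F \<Longrightarrow> \<not> p dvd (\<Sum>T\<in>S. u A T * v T A)"
    and off_diag: "\<And>A B. A \<in> F \<Longrightarrow> B \<in> F \<Longrightarrow> A \<noteq> B \<Longrightarrow> p dvd (\<Sum>T\<in>S. u A T * v T B)"
  shows "card F \<le> card S"
proof (rule ccontr)
  assume "\<not> card F \<le> card S"
  hence less: "card S < card F" by simp
  obtain g where g: "bij_betw g {0..<card F} F"
    using ex_bij_betw_nat_finite[OF F] by blast
  obtain h where h: "bij_betw h {0..<card S} S"
    using ex_bij_betw_nat_finite[OF S] by blast
  \<comment> \<open>Pad the \<open>F \<times> S\<close> and \<open>S \<times> F\<close> matrices with zeros to square ones; the left factor then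
    has a zero column, as \<open>card S < card F\<close>.\<close>
  define L :: "int mat" where
    "L = mat (card F) (card F) (\<lambda>(a, j). if j < card S then u (g a) (h j) else 0)"
  define R :: "int mat" where
    "R = mat (card F) (card F) (\<lambda>(j, b). if j < card S then v (h j) (g b) else 0)"
  have L: "L \<in> carrier_mat (card F) (card F)" and R: "R \<in> carrier_mat (card F) (card F)"
    by (simp_all add: L_def R_def)
  have entry: "(L * R) $$ (a, b) = (\<Sum>T\<in>S. u (g a) T * v T (g b))"
    if "a < card F" "b < card F" for a b
  proof -
    have "(L * R) $$ (a, b) = (\<Sum>j<card S. u (g a) (h j) * v (h j) (g b))"
      using that less L R
      by (simp add: scalar_prod_def L_def R_def lessThan_atLeast0
               sum.mono_neutral_cong_right[of "{0..<card F}" "{0..<card S}"])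
    also have "\<dots> = (\<Sum>T\<in>S. u (g a) T * v T (g b))"
      using sum.reindex_bij_betw[OF h] by (simp add: lessThan_atLeast0)
    finally show ?thesis .
  qed
  have "det L = 0"
    by (rule det_eq_0_if_zero_col[OF L, of "card F - 1"]) (use less in \<open>auto simp: L_def\<close>)
  hence "det (L * R) = 0"
    using det_mult[OF L R] by simp
  moreover have "\<not> p dvd det (L * R)"
  proof (rule prime_not_dvd_det[OF mult_carrier_mat[OF L R] p])
    fix a assume "a < card F"
    thus "\<not> p dvd (L * R) $$ (a, a)"
      using entry diag bij_betwE[OF g] by simp
  next
    fix a b assume "a < card F" "b < card F" "a \<noteq> b"
    moreover have "g a \<noteq> g b"
      using calculation bij_betw_imp_inj_on[OF g] by (auto simp: inj_on_def)
    ultimately show "p dvd (L * R) $$ (a, b)"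
      using entry off_diag bij_betwE[OF g] by simp
  qed
  ultimately show False
    by simp
qed

section \<open>The Frankl--Wilson bound\<close>

lemma frankl_wilson_card_le:
  assumes p: "prime p" and X: "finite X"
    and F: "\<And>A. A \<in> F \<Longrightarrow> A \<subseteq> X \<and> card A = 2 * p ^ m"
    and meet: "\<And>A B. A \<in> F \<Longrightarrow> B \<in> F \<Longrightarrow> A \<inter> B \<noteq> {}"
    and avoid: "\<And>A B. A \<in> F \<Longrightarrow> B \<in> F \<Longrightarrow> A \<noteq> B \<Longrightarrow> card (A \<inter> B) \<noteq> p ^ m"
  shows "card F \<le> (\<Sum>j<p ^ m. card X choose j)"
proof -
  let ?q = "p ^ m"
  define S where "S = {T. T \<subseteq> X \<and> card T < ?q}"
  define u where "u A T = (if T \<subseteq> A then (-1::int) ^ (?q - 1 - card T) else 0)" for A T :: "'a set"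
  define v where "v T B = (if T \<subseteq> B then 1::int else 0)" for T B :: "'a set"
  have finite_inter: "finite (A \<inter> B)" if "A \<in> F" for A B
    using F[OF that] X by (meson finite_Int finite_subset)
  have entry: "(\<Sum>T\<in>S. u A T * v T B) = int ((card (A \<inter> B) - 1) choose (?q - 1))"
    if "A \<in> F" "B \<in> F" for A B
  proof -
    have filter: "{T \<in> S. T \<subseteq> A \<inter> B} = {T. T \<subseteq> A \<inter> B \<and> card T < ?q}"
      using F[OF that(1)] by (auto simp: S_def)
    have "(\<Sum>T\<in>S. u A T * v T B) = (\<Sum>T\<in>S. if T \<subseteq> A \<inter> B then (-1) ^ (?q - 1 - card T) else 0)"
      by (intro sum.cong) (auto simp: u_def v_def)
    also have "\<dots> = (\<Sum>T\<in>{T. T \<subseteq> A \<inter> B \<and> card T < ?q}. (-1) ^ (?q - 1 - card T))"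
      unfolding filter[symmetric] by (rule sum.inter_filter[symmetric]) (simp add: S_def X)
    also have "\<dots> = int ((card (A \<inter> B) - 1) choose (?q - 1))"
      by (rule sum_signed_subsets_card_less)
        (use finite_inter meet that p in \<open>simp_all add: prime_gt_0_nat\<close>)
    finally show ?thesis .
  qed
  have "card F \<le> card S"
  proof (rule card_le_card_if_prime_factorization[of F S "int p" u v])
    show "finite F"
      using F X by (meson PowI finite_Pow_iff finite_subset subsetI)
    show "finite S"
      using X by (simp add: S_def)
    show "prime (int p)"
      using p by simp
  next
    fix A assume "A \<in> F"
    thus "\<not> int p dvd (\<Sum>T\<in>S. u A T * v T A)"
      using F entry prime_not_dvd_choose_double_pred[OF p] by simp
  next
    fix A B assume A: "A \<in> F" and B: "B \<in> F" and "A \<noteq> B"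
    have "\<not> A \<subseteq> B"
      using F[OF A] F[OF B] X \<open>A \<noteq> B\<close> by (metis card_subset_eq finite_subset)
    hence "card (A \<inter> B) < card A"
      using F[OF A] X by (intro psubset_card_mono) (auto intro: finite_subset)
    moreover have "1 \<le> card (A \<inter> B)"
      using meet[OF A B] finite_inter[OF A] by (simp add: Suc_le_eq card_gt_0_iff)
    ultimately have "p dvd (card (A \<inter> B) - 1) choose (?q - 1)"
      using F[OF A] avoid[OF A B \<open>A \<noteq> B\<close>] by (intro prime_dvd_choose_pred[OF p]) auto
    thus "int p dvd (\<Sum>T\<in>S. u A T * v T B)"
      using entry[OF A B] by simp
  qed
  thus ?thesis
    using card_subsets_card_less[OF X] by (simp add: S_def)
qed

lemma card_subsets_containing:
  assumes X: "finite X" and x: "x \<in> X" and k: "0 < k"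
  shows "card {A. A \<subseteq> X \<and> card A = k \<and> x \<in> A} = (card X - 1) choose (k - 1)"
proof -
  let ?C = "{C. C \<subseteq> X - {x} \<and> card C = k - 1}"
  have "{A. A \<subseteq> X \<and> card A = k \<and> x \<in> A} = insert x ` ?C"
  proof (intro equalityI subsetI)
    fix A assume A: "A \<in> {A. A \<subseteq> X \<and> card A = k \<and> x \<in> A}"
    hence "finite A"
      using X finite_subset by blast
    hence "A = insert x (A - {x})" "A - {x} \<in> ?C"
      using A by auto
    thus "A \<in> insert x ` ?C"
      by blast
  next
    fix A assume "A \<in> insert x ` ?C"
    then obtain C where C: "C \<subseteq> X - {x}" "card C = k - 1" and A: "A = insert x C"
      by blast
    have "finite C" "x \<notin> C"
      using C X finite_subset by auto
    hence "card A = k"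
      using A C k by simp
    thus "A \<in> {A. A \<subseteq> X \<and> card A = k \<and> x \<in> A}"
      using A C x k by auto
  qed
  moreover have "inj_on (insert x) ?C"
  proof (rule inj_onI)
    fix C C' assume "C \<in> ?C" "C' \<in> ?C" "insert x C = insert x C'"
    thus "C = C'"
      by (metis Diff_insert_absorb Diff_iff insertI1 mem_Collect_eq subsetD)
  qed
  ultimately show ?thesis
    using X x by (simp add: card_image n_subsets)
qed

lemma exists_equal_profile_half_intersection:
  fixes \<phi> :: "'a set \<Rightarrow> 'b"
  assumes p: "prime p" and X: "finite X" and x: "x \<in> X"
    and Y: "finite Y" "\<And>A. A \<subseteq> X \<Longrightarrow> \<phi> A \<in> Y"
    and few: "card Y * (\<Sum>j<p ^ m. card X choose j) < (card X - 1) choose (2 * p ^ m - 1)"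
  shows "\<exists>A B. A \<subseteq> X \<and> card A = 2 * p ^ m \<and> B \<subseteq> X \<and> card B = 2 * p ^ m \<and>
           card (A \<inter> B) = p ^ m \<and> \<phi> A = \<phi> B"
proof -
  define G where "G = {A. A \<subseteq> X \<and> card A = 2 * p ^ m \<and> x \<in> A}"
  have card_G: "card G = (card X - 1) choose (2 * p ^ m - 1)"
    unfolding G_def using X x p by (simp add: card_subsets_containing prime_gt_0_nat)
  have "\<phi> \<in> G \<rightarrow> Y" "finite G" "Y \<noteq> {}"
    using X Y by (auto simp: G_def)
  then obtain y where big: "card G \<le> card (\<phi> -` {y} \<inter> G) * card Y"
    using pigeonhole_card[of \<phi> G Y] Y(1) by blast
  have "\<not> card (\<phi> -` {y} \<inter> G) \<le> (\<Sum>j<p ^ m. card X choose j)"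
  proof
    assume "card (\<phi> -` {y} \<inter> G) \<le> (\<Sum>j<p ^ m. card X choose j)"
    hence "card (\<phi> -` {y} \<inter> G) * card Y \<le> card Y * (\<Sum>j<p ^ m. card X choose j)"
      by (simp add: mult.commute)
    thus False
      using big few card_G by linarith
  qed
  moreover have "card (\<phi> -` {y} \<inter> G) \<le> (\<Sum>j<p ^ m. card X choose j)"
    if "\<forall>A\<in>\<phi> -` {y} \<inter> G. \<forall>B\<in>\<phi> -` {y} \<inter> G. A \<noteq> B \<longrightarrow> card (A \<inter> B) \<noteq> p ^ m"
    by (rule frankl_wilson_card_le[OF p X]) (use that in \<open>auto simp: G_def\<close>)
  ultimately obtain A B where A: "A \<in> \<phi> -` {y} \<inter> G" and B: "B \<in> \<phi> -` {y} \<inter> G"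
    and "card (A \<inter> B) = p ^ m"
    by blast
  moreover have "A \<subseteq> X \<and> card A = 2 * p ^ m" "B \<subseteq> X \<and> card B = 2 * p ^ m" "\<phi> A = \<phi> B"
    using A B by (simp_all add: G_def)
  ultimately show ?thesis
    by blast
qed

section \<open>The counting estimate\<close>

lemma Suc_times_choose_Suc: "Suc i * (n choose Suc i) = (n - i) * (n choose i)"
  using binomial_absorption[of i n] binomial_absorb_comp[of n i] by simp

lemma sum_choose_le_double_last:
  assumes "3 * m \<le> n"
  shows "(\<Sum>j\<le>m. n choose j) \<le> 2 * (n choose m)"
  using assms
proof (induction m)
  case 0
  then show ?case by simp
next
  case (Suc m)
  have "Suc m * (2 * (n choose m)) = (2 * Suc m) * (n choose m)"
    by simp
  also have "\<dots> \<le> (n - m) * (n choose m)"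
    by (rule mult_le_mono1) (use Suc.prems in simp)
  also have "\<dots> = Suc m * (n choose Suc m)"
    by (rule Suc_times_choose_Suc[symmetric])
  finally have "2 * (n choose m) \<le> n choose Suc m"
    by (rule Suc_mult_le_cancel1[THEN iffD1])
  thus ?case
    using Suc by simp
qed

lemma choose_ge_power_mult:
  fixes \<rho> :: real
  assumes "0 \<le> \<rho>" "\<rho> * h \<le> real n - h" "l + j \<le> h"
  shows "\<rho> ^ j * (n choose l) \<le> n choose (l + j)"
  using assms(3)
proof (induction j)
  case 0
  then show ?case by simp
next
  case (Suc j)
  let ?i = "l + j"
  have "\<rho> * Suc ?i \<le> \<rho> * h"
    using Suc.prems assms(1) by (intro mult_left_mono) auto
  also have "\<dots> \<le> real (n - ?i)"
    using assms(2) Suc.prems by linarith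
  finally have "(n choose ?i) * (\<rho> * Suc ?i) \<le> (n choose ?i) * real (n - ?i)"
    by (intro mult_left_mono) auto
  also have "\<dots> = real (n choose Suc ?i) * real (Suc ?i)"
    using Suc_times_choose_Suc[of ?i n] by (metis of_nat_mult mult.commute)
  finally have "((n choose ?i) * \<rho>) * Suc ?i \<le> real (n choose Suc ?i) * Suc ?i"
    by (simp only: mult.assoc)
  hence "(n choose ?i) * \<rho> \<le> n choose Suc ?i"
    by (rule mult_right_le_imp_le) simp
  moreover have "\<rho> ^ Suc j * (n choose l) \<le> (n choose ?i) * \<rho>"
    using Suc assms(1) by (simp add: mult_ac mult_left_mono)
  ultimately show ?case
    by simp
qed

lemma power_mult_sum_choose_less:
  assumes q: "1 \<le> q" and n: "8 * q < n"
  shows "(real n / (2 * q)) ^ q * (\<Sum>j<q. n choose j) < 2 ^ (2 * q + 1) * ((n - 1) choose (2 * q - 1))"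
proof -
  define r where "r = real n / (2 * q)"
  define B where "B = real (n choose (q - 1))"
  have r: "r > 4" and "B > 0"
    using q n by (simp_all add: r_def B_def field_simps)
  have sum: "real (\<Sum>j<q. n choose j) \<le> 2 * B"
  proof -
    have "(\<Sum>j\<le>q - 1. n choose j) \<le> 2 * (n choose (q - 1))"
      by (rule sum_choose_le_double_last) (use n in linarith)
    hence "(\<Sum>j<q. n choose j) \<le> 2 * (n choose (q - 1))"
      using q by (simp add: lessThan_Suc_atMost[symmetric])
    thus ?thesis
      unfolding B_def by (metis of_nat_le_iff of_nat_mult of_nat_numeral)
  qed
  have "(r - 1) ^ (q + 1) * B \<le> real (n choose (q - 1 + (q + 1)))"
    unfolding B_def by (rule choose_ge_power_mult) (use r q in \<open>auto simp: r_def field_simps\<close>)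
  also have "q - 1 + (q + 1) = 2 * q"
    using q by simp
  finally have top: "(r - 1) ^ (q + 1) * B \<le> real (n choose (2 * q))" .
  have pred: "real ((n - 1) choose (2 * q - 1)) * r = real (n choose (2 * q))"
    using times_binomial_minus1_eq[of "2 * q" n] q
    by (simp add: r_def field_simps flip: of_nat_mult)
  have "r ^ (q + 1) < (2 * (r - 1)) ^ (q + 1)"
    using r by (intro power_strict_mono) auto
  also have "\<dots> = 2 ^ (q + 1) * (r - 1) ^ (q + 1)"
    by (rule power_mult_distrib)
  also have "\<dots> \<le> 4 ^ q * (r - 1) ^ (q + 1)"
  proof (rule mult_right_mono)
    have "(2::real) ^ (q + 1) \<le> 2 ^ (2 * q)"
      using q by (intro power_increasing) auto
    thus "(2::real) ^ (q + 1) \<le> 4 ^ q"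
      by (simp add: power_mult)
  qed (use r in simp)
  finally have grow: "r ^ (q + 1) < 4 ^ q * (r - 1) ^ (q + 1)" .
  have "r ^ q * real (\<Sum>j<q. n choose j) * r \<le> r ^ (q + 1) * (2 * B)"
    using sum r by (simp add: mult.commute[of _ r] mult.assoc mult_left_mono)
  also have "\<dots> < 4 ^ q * (r - 1) ^ (q + 1) * (2 * B)"
    using grow \<open>B > 0\<close> by simp
  also have "\<dots> \<le> 2 * 4 ^ q * real (n choose (2 * q))"
    using top by (simp add: mult_ac mult_left_mono)
  also have "\<dots> = 2 ^ (2 * q + 1) * real ((n - 1) choose (2 * q - 1)) * r"
  proof -
    have "(2::real) ^ (2 * q + 1) = 2 * 4 ^ q"
      by (simp add: power_add power_mult)
    thus ?thesis
      unfolding pred[symmetric] by (simp only: mult.assoc)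
  qed
  finally show ?thesis
    unfolding r_def[symmetric] using r by (simp add: mult_less_cancel_right)
qed

lemma two_power_mult_sum_choose_less:
  fixes n k b t q :: nat
  assumes b: "0 < b" and q: "1 \<le> q" and k: "k = 2 * q" and n: "0 < n"
    and t: "real t \<le> real k / (2 * real b) * log 2 (real n / real k) - (real k + 1) / real b"
  shows "2 ^ (b * t) * (\<Sum>j<q. n choose j) < (n - 1) choose (k - 1)"
proof -
  define r where "r = real n / (2 * q)"
  have r: "r > 0"
    using n q by (simp add: r_def)
  have "real b * real t \<le> real b * (real k / (2 * real b) * log 2 r - (real k + 1) / real b)"
    using t b by (simp add: r_def k)
  also have "\<dots> = real q * log 2 r - (2 * real q + 1)"
    using b by (simp add: k field_simps)
  finally have exponent: "real (b * t) + (2 * q + 1) \<le> q * log 2 r"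
    by simp
  hence "real q * 2 < real q * log 2 r"
    using of_nat_0_le_iff[of "b * t"] by linarith
  hence "2 < log 2 r"
    using q by simp
  hence "8 * q < n"
    using r q by (simp add: less_log_iff r_def field_simps)
  have "2 ^ (b * t) * 2 ^ (2 * q + 1) = (2::real) ^ (b * t + (2 * q + 1))"
    by (simp add: power_add)
  also have "\<dots> = 2 powr real (b * t + (2 * q + 1))"
    by (rule powr_realpow[symmetric]) simp
  also have "\<dots> \<le> 2 powr (q * log 2 r)"
    using exponent by (intro powr_mono) auto
  also have "\<dots> = (2 powr log 2 r) powr q"
    by (simp add: powr_powr mult.commute)
  also have "\<dots> = r ^ q"
    using r by (simp add: powr_realpow)
  finally have budget: "2 ^ (b * t) * 2 ^ (2 * q + 1) \<le> r ^ q" .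
  have "(2 ^ (b * t) * real (\<Sum>j<q. n choose j)) * 2 ^ (2 * q + 1)
      = (2 ^ (b * t) * 2 ^ (2 * q + 1)) * real (\<Sum>j<q. n choose j)"
    by (simp only: mult_ac)
  also have "\<dots> \<le> r ^ q * real (\<Sum>j<q. n choose j)"
    using budget by (rule mult_right_mono) (rule of_nat_0_le_iff)
  also have "\<dots> < 2 ^ (2 * q + 1) * real ((n - 1) choose (k - 1))"
    using power_mult_sum_choose_less[OF q \<open>8 * q < n\<close>] by (simp add: r_def k)
  finally have "real (2 ^ (b * t) * (\<Sum>j<q. n choose j)) < real ((n - 1) choose (k - 1))"
    by (simp add: mult.commute[of _ "2 ^ (2 * q + 1)"])
  thus ?thesis
    by (simp only: of_nat_less_iff)
qed

theorem lemma2: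
  fixes n k b t :: nat and Q :: "nat \<Rightarrow> (nat \<times> nat) set"
  assumes "0 < n" "0 < k" "0 < b" "0 < t" "k \<le> n"
    and "\<forall>i\<in>{1..t}. Q i \<subseteq> {1..n} \<times> {1..b}"
    and "\<exists>p m. prime (p::nat) \<and> 1 \<le> m \<and> k = 2 * p ^ m"
    and "real t \<le> real k / (2 * real b) * log 2 (real n / real k) - (real k + 1) / real b"
  shows "\<exists>A B. A \<subseteq> {1..n} \<and> card A = k \<and> B \<subseteq> {1..n} \<and> card B = k \<and>
           2 * card (A \<inter> B) = k \<and>
           (\<forall>\<beta>\<in>{1..b}. \<forall>i\<in>{1..t}.
              odd (card (A \<inter> query_channel n Q i \<beta>)) \<longleftrightarrow> odd (card (B \<inter> query_channel n Q i \<beta>)))"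
proof -
  obtain p m where p: "prime p" and k: "k = 2 * p ^ m"
    using assms(7) by blast
  define profile where
    "profile A = {(i, \<beta>) \<in> {1..t} \<times> {1..b}. odd (card (A \<inter> query_channel n Q i \<beta>))}" for A
  have "2 ^ (b * t) * (\<Sum>j<p ^ m. n choose j) < (n - 1) choose (k - 1)"
    by (rule two_power_mult_sum_choose_less[OF assms(3) _ k assms(1) assms(8)])
      (use p in \<open>simp add: Suc_le_eq prime_gt_0_nat\<close>)
  hence "card (Pow ({1..t} \<times> {1..b})) * (\<Sum>j<p ^ m. card {1..n} choose j)
      < (card {1..n} - 1) choose (2 * p ^ m - 1)"
    by (simp add: card_Pow card_cartesian_product mult.commute k)
  hence "\<exists>A B. A \<subseteq> {1..n} \<and> card A = 2 * p ^ m \<and> B \<subseteq> {1..n} \<and> card B = 2 * p ^ m \<and>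
           card (A \<inter> B) = p ^ m \<and> profile A = profile B"
    by (intro exists_equal_profile_half_intersection[OF p, where x = 1])
      (use assms(1) in \<open>auto simp: profile_def\<close>)
  then obtain A B where "A \<subseteq> {1..n}" "card A = k" "B \<subseteq> {1..n}" "card B = k"
    and "2 * card (A \<inter> B) = k" and "profile A = profile B"
    using k by auto
  thus ?thesis
    unfolding profile_def set_eq_iff by blast
qed

end
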